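(* Let $mG$, $mG'$ be finite canonical misinformation games and $t\ge0$. If $mG'\in\mathcal{AD}^{(t)}(\{mG\})$ and $mG'\in\mathcal{AD}(\{mG'\})$, then $mG'\in\mathcal{AD}^\infty(\{mG\})$.
   Context: A normal-form game is $G=\langle N,S,P\rangle$ with finite players $N$, finite pure strategy sets $S_i$, positions $S=\times_i S_i$, payoffs $P_i:S\to\mathbb{R}$. A misinformation game $mG=\langle G^0,G^1,\dots,G^{|N|}\rangle$ consists of the actual game $G^0$ and subjective games $G^i$; it is canonical if all $G^i=\langle N,S,P^i\rangle$ differ from $G^0$ only in payoffs and in every $G^i$ all players have equally many pure strategies. $NME(mG)$ is the set of profiles $\sigma=(\sigma_1,\dots,\sigma_{|N|})$ such that each $\sigma_i$ is player $i$'s component of some Nash equilibrium of $G^i$. $\chi(\sigma)=\mathrm{supp}(\sigma_1)\times\dots\times\mathrm{supp}(\sigma_{|N|})$. For $\vec v\in S$, $mG_{\vec v}$ is obtained by replacing, in every $P^i$ ($i\ge1$), the payoff vector at position $\vec v$ by $P^0(\vec v)$. For a set $M$ of misinformation games, $\mathcal{AD}(M)=\{mG_{\vec u}: mG\in M,\sigma\in NME(mG),\vec u\in\chi(\sigma)\}$, $\mathcal{AD}^{(0)}(M)=M$, $\mathcal{AD}^{(t+1)}(M)=\mathcal{AD}^{(t)}(\mathcal{AD}(M))$; the length $\mathfrak{L}$ is the least $t\ge0$ with $\mathcal{AD}^{(t+1)}(M)=\mathcal{AD}^{(t)}(M)$ and $\mathcal{AD}^\infty(M)=\mathcal{AD}^{(\mathfrak{L})}(M)$.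 *)

theory Defs
  imports Complex_Main "HOL-Library.FuncSet"
begin

text \<open>Players are 0,...,n-1; every player's pure strategies are 0,...,m-1
  (canonical: all games share N and S, and all players have equally many strategies).
  A misinformation game is a function g :: nat => nat => (nat => nat) => real, where
  g k i v is the payoff of player i at position v in game G^k; k = 0 is the actual game,
  k = Suc i is the subjective game of player i.\<close>

type_synonym mgame = "nat \<Rightarrow> nat \<Rightarrow> (nat \<Rightarrow> nat) \<Rightarrow> real"

definition positions :: "nat \<Rightarrow> nat \<Rightarrow> (nat \<Rightarrow> nat) set" where
  "positions n m = Pi\<^sub>E {..<n} (\<lambda>_. {..<m})"

definition canonical_mg :: "nat \<Rightarrow> nat \<Rightarrow> mgame \<Rightarrow> bool" where
  "canonical_mg n m g \<longleftrightarrow> 1 \<le> m \<and>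
     (\<forall>k i v. \<not> (k \<le> n \<and> i < n \<and> v \<in> positions n m) \<longrightarrow> g k i v = 0)"

definition mixed :: "nat \<Rightarrow> (nat \<Rightarrow> real) \<Rightarrow> bool" where
  "mixed m s \<longleftrightarrow> (\<forall>a. 0 \<le> s a) \<and> (\<forall>a. m \<le> a \<longrightarrow> s a = 0) \<and> (\<Sum>a<m. s a) = 1"

definition exp_payoff :: "nat \<Rightarrow> nat \<Rightarrow> (nat \<Rightarrow> (nat \<Rightarrow> nat) \<Rightarrow> real) \<Rightarrow> nat
    \<Rightarrow> (nat \<Rightarrow> nat \<Rightarrow> real) \<Rightarrow> real" where
  "exp_payoff n m P i \<sigma> = (\<Sum>v\<in>positions n m. (\<Prod>j<n. \<sigma> j (v j)) * P i v)"

definition nash :: "nat \<Rightarrow> nat \<Rightarrow> (nat \<Rightarrow> (nat \<Rightarrow> nat) \<Rightarrow> real)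
    \<Rightarrow> (nat \<Rightarrow> nat \<Rightarrow> real) \<Rightarrow> bool" where
  "nash n m P \<sigma> \<longleftrightarrow> (\<forall>i<n. mixed m (\<sigma> i)) \<and>
     (\<forall>i<n. \<forall>\<tau>. mixed m \<tau> \<longrightarrow> exp_payoff n m P i (\<sigma>(i := \<tau>)) \<le> exp_payoff n m P i \<sigma>)"

definition nme :: "nat \<Rightarrow> nat \<Rightarrow> mgame \<Rightarrow> (nat \<Rightarrow> nat \<Rightarrow> real) \<Rightarrow> bool" where
  "nme n m g \<sigma> \<longleftrightarrow> (\<forall>i<n. \<exists>\<tau>. nash n m (g (Suc i)) \<tau> \<and> \<sigma> i = \<tau> i)"

definition chi :: "nat \<Rightarrow> nat \<Rightarrow> (nat \<Rightarrow> nat \<Rightarrow> real) \<Rightarrow> (nat \<Rightarrow> nat) set" where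
  "chi n m \<sigma> = {v \<in> positions n m. \<forall>i<n. 0 < \<sigma> i (v i)}"

definition upd :: "nat \<Rightarrow> mgame \<Rightarrow> (nat \<Rightarrow> nat) \<Rightarrow> mgame" where
  "upd n g v = (\<lambda>k i w. if 1 \<le> k \<and> k \<le> n \<and> w = v then g 0 i w else g k i w)"

definition AD :: "nat \<Rightarrow> nat \<Rightarrow> mgame set \<Rightarrow> mgame set" where
  "AD n m M = {upd n g u | g \<sigma> u. g \<in> M \<and> nme n m g \<sigma> \<and> u \<in> chi n m \<sigma>}"

definition AD_iter :: "nat \<Rightarrow> nat \<Rightarrow> nat \<Rightarrow> mgame set \<Rightarrow> mgame set" where
  "AD_iter n m t M = (AD n m ^^ t) M"

definition AD_length :: "nat \<Rightarrow> nat \<Rightarrow> mgame set \<Rightarrow> nat" where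
  "AD_length n m M = (LEAST t. AD_iter n m (Suc t) M = AD_iter n m t M)"

definition AD_inf :: "nat \<Rightarrow> nat \<Rightarrow> mgame set \<Rightarrow> mgame set" where
  "AD_inf n m M = AD_iter n m (AD_length n m M) M"

end

theory Submission
  imports Defs
begin

text \<open>A step of AD applied to a single game h either returns h itself or repairs one
  position at which some subjective game disagrees with the actual game, so along a chain
  of steps from mG at most as many steps as mG has such positions are not self-loops.
  A longer chain therefore contains a self-loop, which may be dropped or repeated: the
  stages AD^(t)({mG}) become constant, and AD^\<infinity>({mG}) is that constant value.  By
  monotonicity of AD, a game reached at stage t that reproduces itself under AD is present
  at every later stage.\<close>

lemma funpow_fixpoint_from:
  fixes F :: "'a \<Rightarrow> 'a"
  assumes "(F ^^ Suc L) x = (F ^^ L) x"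
  shows "(F ^^ (L + k)) x = (F ^^ L) x"
  by (induction k) (use assms in simp_all)

lemma funpow_post_fixpoint_persists:
  fixes F :: "'a set \<Rightarrow> 'a set"
  assumes "mono F" and "a \<in> F {a}" and "a \<in> (F ^^ t) M"
  shows "a \<in> (F ^^ (k + t)) M"
proof -
  have "{a} \<subseteq> (F ^^ k) ((F ^^ t) M)"
    using funpow_mono2[OF \<open>mono F\<close>, of 0 k "{a}" "(F ^^ t) M"] assms(2,3) by simp
  then show ?thesis by (simp add: funpow_add)
qed

lemma funpow_Image:
  fixes R :: "'a rel"
  shows "(Image R ^^ t) M = (R ^^ t) `` M"
  by (induction t) (simp_all add: relcomp_Image)

lemma relpow_Suc_drop_loop:
  fixes f :: "'a \<Rightarrow> nat"
  assumes descending: "\<And>x y. (x, y) \<in> R \<Longrightarrow> y = x \<or> f y < f x"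
  shows "(x, z) \<in> R ^^ Suc t \<Longrightarrow> f x \<le> t \<Longrightarrow> (x, z) \<in> R ^^ t"
proof (induction t arbitrary: x)
  case 0
  then obtain y where "(x, y) \<in> R" "(y, z) \<in> R ^^ 0"
    by (blast elim: relpow_Suc_E2)
  with descending 0 show ?case by fastforce
next
  case (Suc t)
  then obtain y where y: "(x, y) \<in> R" "(y, z) \<in> R ^^ Suc t"
    by (blast elim: relpow_Suc_E2)
  from descending[OF y(1)] show ?case
  proof
    assume "y = x"
    with y show ?thesis by simp
  next
    assume "f y < f x"
    with Suc have "(y, z) \<in> R ^^ t" using y(2) by simp
    with y(1) show ?thesis by (rule relpow_Suc_I2)
  qed
qed

lemma relpow_Suc_repeat_loop:
  fixes f :: "'a \<Rightarrow> nat"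
  assumes descending: "\<And>x y. (x, y) \<in> R \<Longrightarrow> y = x \<or> f y < f x"
  shows "(x, z) \<in> R ^^ t \<Longrightarrow> f x < t \<Longrightarrow> (x, z) \<in> R ^^ Suc t"
proof (induction t arbitrary: x)
  case 0
  then show ?case by simp
next
  case (Suc t)
  then obtain y where y: "(x, y) \<in> R" "(y, z) \<in> R ^^ t"
    by (blast elim: relpow_Suc_E2)
  from descending[OF y(1)] show ?case
  proof
    assume "y = x"
    with y(1) Suc.prems(1) show ?thesis by (blast intro: relpow_Suc_I2)
  next
    assume "f y < f x"
    with Suc have "(y, z) \<in> R ^^ Suc t" using y(2) by simp
    with y(1) show ?thesis by (rule relpow_Suc_I2)
  qed
qed

lemma descending_relpow_Image_stable:
  fixes f :: "'a \<Rightarrow> nat"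
  assumes "\<And>x y. (x, y) \<in> R \<Longrightarrow> y = x \<or> f y < f x" and "f x < t"
  shows "(R ^^ Suc t) `` {x} = (R ^^ t) `` {x}"
  using relpow_Suc_drop_loop[of R f x _ t] relpow_Suc_repeat_loop[of R f x _ t] assms
  by fastforce

definition misinformed :: "nat \<Rightarrow> nat \<Rightarrow> mgame \<Rightarrow> (nat \<Rightarrow> nat) set" where
  "misinformed n m h =
     {v \<in> positions n m. \<exists>k i. 1 \<le> k \<and> k \<le> n \<and> h k i v \<noteq> h 0 i v}"

definition AD_rel :: "nat \<Rightarrow> nat \<Rightarrow> mgame rel" where
  "AD_rel n m = {(h, h'). h' \<in> AD n m {h}}"

lemma finite_misinformed: "finite (misinformed n m h)"
  unfolding misinformed_def positions_def by (simp add: finite_PiE)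

lemma misinformed_upd: "misinformed n m (upd n h u) = misinformed n m h - {u}"
  unfolding misinformed_def upd_def by auto

lemma upd_eq_self:
  "u \<in> positions n m \<Longrightarrow> u \<notin> misinformed n m h \<Longrightarrow> upd n h u = h"
  unfolding misinformed_def upd_def by (intro ext) auto

lemma AD_rel_descending:
  assumes "(h, h') \<in> AD_rel n m"
  shows "h' = h \<or> card (misinformed n m h') < card (misinformed n m h)"
proof -
  obtain \<sigma> u where h': "h' = upd n h u" and "u \<in> chi n m \<sigma>"
    using assms unfolding AD_rel_def AD_def by auto
  then have "u \<in> positions n m" unfolding chi_def by simp
  show ?thesis
  proof (cases "u \<in> misinformed n m h")
    case True
    then have "card (misinformed n m h') < card (misinformed n m h)"
      unfolding h' misinformed_upd by (rule card_Diff1_less[OF finite_misinformed])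
    then show ?thesis ..
  next
    case False
    with \<open>u \<in> positions n m\<close> show ?thesis by (simp add: h' upd_eq_self)
  qed
qed

lemma mono_AD: "mono (AD n m)"
  unfolding mono_def AD_def by blast

lemma AD_iter_eq_Image: "AD_iter n m t M = (AD_rel n m ^^ t) `` M"
proof -
  have "AD n m = Image (AD_rel n m)"
    unfolding AD_def AD_rel_def by auto
  then show ?thesis unfolding AD_iter_def by (simp add: funpow_Image)
qed

lemma AD_iter_Suc_stable:
  "card (misinformed n m g) < t \<Longrightarrow> AD_iter n m (Suc t) {g} = AD_iter n m t {g}"
  unfolding AD_iter_eq_Image using AD_rel_descending by (rule descending_relpow_Image_stable)

lemma AD_iter_Suc_AD_length:
  "AD_iter n m (Suc (AD_length n m {g})) {g} = AD_iter n m (AD_length n m {g}) {g}"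
  unfolding AD_length_def by (rule LeastI, rule AD_iter_Suc_stable, rule lessI)

theorem proposition10:
  fixes n m :: nat and g g' :: mgame and t :: nat
  assumes "canonical_mg n m g" and "canonical_mg n m g'"
    and "g' \<in> AD_iter n m t {g}"
    and "g' \<in> AD n m {g'}"
  shows "g' \<in> AD_inf n m {g}"
proof -
  let ?L = "AD_length n m {g}"
  have "g' \<in> AD_iter n m (?L + t) {g}"
    using funpow_post_fixpoint_persists[OF mono_AD assms(4) assms(3)[unfolded AD_iter_def]]
    unfolding AD_iter_def .
  also have "AD_iter n m (?L + t) {g} = AD_iter n m ?L {g}"
    using AD_iter_Suc_AD_length unfolding AD_iter_def by (rule funpow_fixpoint_from)
  finally show ?thesis unfolding AD_inf_def .
qed

end
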